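(* For every integer $n \ge 2$, let $F_n(x) = \sum_{k=1}^{n} x^{\log k}$ for $0 < x \le 1$. Then $$\frac{\pi^2}{6} \sum_{\substack{p \le n\\ p \text{ prime}}} \frac{1}{\log p} \;\ge\; \int_0^1 \frac{\log F_n(x)}{x}\, dx.$$
   Context: $\log$ denotes the natural logarithm; the sum runs over all primes $p \le n$. *)

theory Defs
  imports "HOL-Analysis.Analysis" "HOL-Computational_Algebra.Primes"
begin

definition F :: "nat \<Rightarrow> real \<Rightarrow> real" where
  "F n x = (\<Sum>k = 1..n. x powr ln (real k))"

end

theory Submission
  imports Defs
begin

text \<open>
  For \<open>k \<le> n\<close> unique factorisation gives \<open>x^(log k) = \<Prod>\<^sub>p\<^sub>\<le>\<^sub>n (x^(log p))^(v\<^sub>p(k))\<close>, and distinct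
  \<open>k\<close> have distinct exponent vectors, so \<open>F\<^sub>n(x)\<close> is bounded by the truncated Euler product
  \<open>\<Prod>\<^sub>p\<^sub>\<le>\<^sub>n 1 / (1 - x^(log p))\<close>. Taking logarithms,
  \<open>log F\<^sub>n(x) / x \<le> \<Sum>\<^sub>p -log(1 - x^(log p)) / x\<close>; expanding the logarithm into its power series
  and integrating termwise (monotone convergence) gives
  \<open>\<integral>\<^sub>0\<^sup>1 -log(1 - x^a) / x dx = \<Sum>\<^sub>m 1/(a m\<^sup>2) = \<pi>\<^sup>2/(6a)\<close>.
\<close>

lemma multiplicity_le_self:
  fixes p k :: nat
  assumes "prime p" "k > 0"
  shows "multiplicity p k \<le> k"
proof -
  have "multiplicity p k < 2 ^ multiplicity p k" by simp
  also have "\<dots> \<le> p ^ multiplicity p k"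
    using assms prime_ge_2_nat power_mono by blast
  also have "\<dots> \<le> k"
    using assms by (simp add: dvd_imp_le multiplicity_dvd)
  finally show ?thesis by simp
qed

lemma ln_eq_sum_multiplicity:
  fixes k :: nat and P :: "nat set"
  assumes "k > 0" "finite P" "P \<subseteq> {p. prime p}" "prime_factors k \<subseteq> P"
  shows "ln (real k) = (\<Sum>p\<in>P. real (multiplicity p k) * ln (real p))"
proof -
  have "(\<Prod>p\<in>P. p ^ multiplicity p k) = (\<Prod>p\<in>prime_factors k. p ^ multiplicity p k)"
  proof (rule prod.mono_neutral_right[OF assms(2,4)])
    show "\<forall>p\<in>P - prime_factors k. p ^ multiplicity p k = 1"
      using assms(1,3) by (auto simp: in_prime_factors_iff not_dvd_imp_multiplicity_0)
  qed
  also have "\<dots> = k"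
    using assms(1) by (simp add: prod_prime_factors)
  finally have "real k = real (\<Prod>p\<in>P. p ^ multiplicity p k)"
    by simp
  also have "\<dots> = (\<Prod>p\<in>P. real p ^ multiplicity p k)"
    by simp
  also have "ln \<dots> = (\<Sum>p\<in>P. ln (real p ^ multiplicity p k))"
    using assms(2,3) by (intro ln_prod) (auto simp: prime_gt_0_nat)
  finally show ?thesis
    using assms(3) by (auto simp: ln_realpow prime_gt_0_nat intro!: sum.cong)
qed

lemma prime_factors_subset_primes_upto:
  fixes k n :: nat
  assumes "k \<in> {1..n}"
  shows "prime_factors k \<subseteq> {p. prime p \<and> p \<le> n}"
  using assms by (auto simp: in_prime_factors_iff dest!: dvd_imp_le)

lemma powr_ln_eq_prod_multiplicity:
  fixes k n :: nat and x :: real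
  assumes "k \<in> {1..n}" "x > 0"
  shows "x powr ln (real k) =
           (\<Prod>p\<in>{p. prime p \<and> p \<le> n}. (x powr ln (real p)) ^ multiplicity p k)"
proof -
  have "ln (real k) = (\<Sum>p\<in>{p. prime p \<and> p \<le> n}. real (multiplicity p k) * ln (real p))"
    using assms prime_factors_subset_primes_upto by (intro ln_eq_sum_multiplicity) auto
  then show ?thesis
    using assms(2) by (simp add: powr_sum powr_realpow[symmetric] powr_powr mult.commute)
qed

lemma inj_on_multiplicity_vector:
  fixes n :: nat
  shows "inj_on (\<lambda>k. restrict (\<lambda>p. multiplicity p k) {p. prime p \<and> p \<le> n}) {1..n}"
proof (rule inj_onI)
  fix a b
  assume a: "a \<in> {1..n}" and b: "b \<in> {1..n}"
    and eq: "restrict (\<lambda>p. multiplicity p a) {p. prime p \<and> p \<le> n} =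
             restrict (\<lambda>p. multiplicity p b) {p. prime p \<and> p \<le> n}"
  show "a = b"
  proof (rule multiplicity_eq_nat)
    show "a > 0" "b > 0" using a b by auto
    fix q :: nat
    assume q: "prime q"
    show "multiplicity q a = multiplicity q b"
    proof (cases "q \<le> n")
      case True
      then show ?thesis using q fun_cong[OF eq, of q] by simp
    next
      case False
      then have "q \<notin> prime_factors a" "q \<notin> prime_factors b"
        using a b prime_factors_subset_primes_upto by blast+
      then show ?thesis
        using a b q by (simp add: in_prime_factors_iff not_dvd_imp_multiplicity_0)
    qed
  qed
qed

lemma geometric_partial_sum_le:
  fixes y :: real
  assumes "0 \<le> y" "y < 1"
  shows "(\<Sum>j\<le>m. y ^ j) \<le> 1 / (1 - y)"
proof -
  have "(\<Sum>j\<le>m. y ^ j) \<le> (\<Sum>j. y ^ j)"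
    using assms by (intro sum_le_suminf summable_geometric) auto
  also have "\<dots> = 1 / (1 - y)"
    using assms by (simp add: suminf_geometric)
  finally show ?thesis .
qed

text \<open>
  Each \<open>k \<le> n\<close> is encoded by its exponent vector on the primes \<open>\<le> n\<close>, whose entries are at
  most \<open>n\<close>; the full box of such vectors expands the product of truncated geometric series.
\<close>

lemma sum_prod_multiplicity_le_euler_product:
  fixes n :: nat and y :: "nat \<Rightarrow> real"
  defines "P \<equiv> {p. prime p \<and> p \<le> n}"
  assumes y: "\<And>p. p \<in> P \<Longrightarrow> 0 \<le> y p \<and> y p < 1"
  shows "(\<Sum>k=1..n. \<Prod>p\<in>P. y p ^ multiplicity p k) \<le> (\<Prod>p\<in>P. 1 / (1 - y p))"
proof -
  define v where "v k = restrict (\<lambda>p. multiplicity p k) P" for k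
  define g where "g e = (\<Prod>p\<in>P. y p ^ e p)" for e :: "nat \<Rightarrow> nat"
  have finP: "finite P" by (simp add: P_def)
  have "(\<Sum>k=1..n. \<Prod>p\<in>P. y p ^ multiplicity p k) = (\<Sum>k=1..n. g (v k))"
    by (simp add: g_def v_def)
  also have "\<dots> = sum g (v ` {1..n})"
    using inj_on_multiplicity_vector[of n] by (simp add: sum.reindex v_def P_def)
  also have "\<dots> \<le> sum g (PiE P (\<lambda>_. {..n}))"
  proof (rule sum_mono2)
    show "finite (PiE P (\<lambda>_. {..n}))" using finP by (simp add: finite_PiE)
    have "multiplicity p k \<le> n" if "p \<in> P" "k \<in> {1..n}" for p k
      using that multiplicity_le_self[of p k] by (simp add: P_def)
    then show "v ` {1..n} \<subseteq> PiE P (\<lambda>_. {..n})"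
      by (auto simp: v_def)
    show "0 \<le> g e" for e
      using y by (auto simp: g_def intro: prod_nonneg)
  qed
  also have "\<dots> = (\<Prod>p\<in>P. \<Sum>j\<le>n. y p ^ j)"
    unfolding g_def by (rule prod_sum_PiE[symmetric]) (simp_all add: finP)
  also have "\<dots> \<le> (\<Prod>p\<in>P. 1 / (1 - y p))"
    using y by (intro prod_mono) (auto intro: sum_nonneg geometric_partial_sum_le)
  finally show ?thesis .
qed

lemma powr_ln_prime_bounds:
  fixes x :: real and p :: nat
  assumes "0 < x" "x < 1" "prime p"
  shows "0 < x powr ln (real p)" "x powr ln (real p) < 1"
proof -
  have "ln (real p) > 0" using prime_gt_1_nat[OF assms(3)] by simp
  then show "x powr ln (real p) < 1"
    using assms powr_less_mono2[of "ln (real p)" x 1] by simp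
qed (use assms in simp)

lemma F_le_euler_product:
  fixes n :: nat and x :: real
  assumes "0 < x" "x < 1"
  shows "F n x \<le> (\<Prod>p\<in>{p. prime p \<and> p \<le> n}. 1 / (1 - x powr ln (real p)))"
proof -
  have "F n x = (\<Sum>k=1..n. \<Prod>p\<in>{p. prime p \<and> p \<le> n}. (x powr ln (real p)) ^ multiplicity p k)"
    unfolding F_def using assms by (intro sum.cong refl powr_ln_eq_prod_multiplicity) auto
  also have "\<dots> \<le> (\<Prod>p\<in>{p. prime p \<and> p \<le> n}. 1 / (1 - x powr ln (real p)))"
    using assms powr_ln_prime_bounds by (intro sum_prod_multiplicity_le_euler_product) auto
  finally show ?thesis .
qed

lemma one_le_F:
  assumes "x > 0" "n \<ge> 1"
  shows "1 \<le> F n x"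
proof -
  have "x powr ln (real 1) \<le> (\<Sum>k = 1..n. x powr ln (real k))"
    by (rule member_le_sum) (use assms in auto)
  then show ?thesis using assms by (simp add: F_def)
qed

lemma ln_F_le_sum_ln:
  fixes n :: nat and x :: real
  assumes "n \<ge> 1" "0 < x" "x < 1"
  shows "ln (F n x) \<le> (\<Sum>p\<in>{p. prime p \<and> p \<le> n}. - ln (1 - x powr ln (real p)))"
proof -
  have lt1: "x powr ln (real p) < 1" if "p \<in> {p. prime p \<and> p \<le> n}" for p
    using that assms powr_ln_prime_bounds by auto
  have "ln (F n x) \<le> ln (\<Prod>p\<in>{p. prime p \<and> p \<le> n}. 1 / (1 - x powr ln (real p)))"
    using F_le_euler_product[OF assms(2,3), of n] one_le_F[OF assms(2,1)] by (intro ln_mono) auto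
  also have "\<dots> = (\<Sum>p\<in>{p. prime p \<and> p \<le> n}. ln (1 / (1 - x powr ln (real p))))"
    using lt1 by (intro ln_prod) (simp_all, metis less_irrefl)
  also have "\<dots> = (\<Sum>p\<in>{p. prime p \<and> p \<le> n}. - ln (1 - x powr ln (real p)))"
    using lt1 by (intro sum.cong refl) (simp add: ln_div)
  finally show ?thesis .
qed

lemma continuous_on_ln_F_div:
  assumes "n \<ge> 1"
  shows "continuous_on {0<..<1} (\<lambda>x. ln (F n x) / x)"
proof -
  have "continuous_on {0<..<1::real} (F n)"
    unfolding F_def by (intro continuous_intros) auto
  moreover have "F n x \<noteq> 0" if "x \<in> {0<..<1}" for x
    using that one_le_F[OF _ assms, of x] by auto
  ultimately show ?thesis
    by (intro continuous_intros) auto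
qed

lemma ln_F_div_bounds:
  fixes n :: nat and x :: real
  assumes "n \<ge> 1" "0 < x" "x < 1"
  shows "0 \<le> ln (F n x) / x"
    and "ln (F n x) / x \<le> (\<Sum>p\<in>{p. prime p \<and> p \<le> n}. - ln (1 - x powr ln (real p)) / x)"
proof -
  show "0 \<le> ln (F n x) / x"
    using assms one_le_F[of x n] by simp
  have "ln (F n x) / x \<le> (\<Sum>p\<in>{p. prime p \<and> p \<le> n}. - ln (1 - x powr ln (real p))) / x"
    using assms ln_F_le_sum_ln[of n x] by (intro divide_right_mono) auto
  then show "ln (F n x) / x \<le> (\<Sum>p\<in>{p. prime p \<and> p \<le> n}. - ln (1 - x powr ln (real p)) / x)"
    by (simp only: sum_divide_distrib)
qed

lemma sums_neg_ln_one_minus_powr_div: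
  fixes a x :: real
  assumes a: "a > 0" and x: "0 < x" "x < 1"
  shows "(\<lambda>m. x powr (a * (real m + 1) - 1) / (real m + 1)) sums (- ln (1 - x powr a) / x)"
proof -
  define y where "y = x powr a"
  have y: "0 \<le> y" "y < 1"
    using a x powr_less_mono2[of a x 1] by (auto simp: y_def)
  have "(\<lambda>m. - ((-(-y)) ^ m) / real m) sums ln (1 + (-y))"
    by (rule ln_series') (use y in auto)
  then have "(\<lambda>m. y ^ m / real m) sums (- ln (1 - y))"
    using sums_minus by fastforce
  then have "(\<lambda>m. y ^ Suc m / real (Suc m) / x) sums (- ln (1 - y) / x)"
    by (intro sums_divide) (subst sums_Suc_iff, simp)
  moreover have "y ^ Suc m / real (Suc m) / x = x powr (a * (real m + 1) - 1) / (real m + 1)" for m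
    using x by (simp add: y_def powr_realpow[symmetric] powr_powr powr_diff powr_add[symmetric]
        algebra_simps)
  ultimately show ?thesis by (simp add: y_def)
qed

lemma has_integral_powr_div_succ:
  fixes a :: real and m :: nat
  assumes "a > 0"
  shows "((\<lambda>x. x powr (a * (real m + 1) - 1) / (real m + 1)) has_integral
          1 / a * (1 / (real m + 1)\<^sup>2)) {0<..<1}"
proof -
  have "((\<lambda>x. x powr (a * (real m + 1) - 1)) has_integral
          1 powr (a * (real m + 1) - 1 + 1) / (a * (real m + 1) - 1 + 1)) {0..1}"
    using assms by (intro has_integral_powr_from_0) (auto simp: add_pos_nonneg)
  then have "((\<lambda>x. x powr (a * (real m + 1) - 1) / (real m + 1)) has_integral
          1 / (a * (real m + 1)) / (real m + 1)) {0<..<1}"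
    by (intro has_integral_divide) (simp add: has_integral_Icc_iff_Ioo)
  then show ?thesis by (simp add: power2_eq_square mult.assoc)
qed

lemma has_integral_neg_ln_one_minus_powr_div:
  fixes a :: real
  assumes a: "a > 0"
  shows "((\<lambda>x. - ln (1 - x powr a) / x) has_integral pi\<^sup>2 / 6 / a) {0<..<1}"
proof -
  define f where "f M x = (\<Sum>m<M. x powr (a * (real m + 1) - 1) / (real m + 1))" for M x
  define c where "c M = 1 / a * (\<Sum>m<M. 1 / (real m + 1)\<^sup>2)" for M
  have f_integral: "(f M has_integral c M) {0<..<1}" for M
    unfolding f_def c_def sum_distrib_left
    using has_integral_powr_div_succ[OF a] by (intro has_integral_sum) auto
  then have integral_f: "(\<lambda>M. integral {0<..<1} (f M)) = c"
    by blast
  have "(\<lambda>M. \<Sum>m<M. 1 / (real m + 1)\<^sup>2) \<longlonglongrightarrow> pi\<^sup>2 / 6"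
    using inverse_squares_sums by (simp add: sums_def add.commute)
  then have lim_c: "c \<longlonglongrightarrow> pi\<^sup>2 / 6 / a"
    unfolding c_def using a by (auto intro!: tendsto_eq_intros)
  have "(\<lambda>x. - ln (1 - x powr a) / x) integrable_on {0<..<1} \<and>
      (c \<longlongrightarrow> integral {0<..<1} (\<lambda>x. - ln (1 - x powr a) / x)) sequentially"
    unfolding integral_f[symmetric]
  proof (rule monotone_convergence_increasing)
    show "f M integrable_on {0<..<1}" for M using f_integral by blast
    show "f M x \<le> f (Suc M) x" for M x
      unfolding f_def by simp
    show "(\<lambda>M. f M x) \<longlonglongrightarrow> - ln (1 - x powr a) / x" if "x \<in> {0<..<1}" for x
      using sums_neg_ln_one_minus_powr_div[OF a, of x] that by (auto simp: f_def sums_def)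
    show "bounded (range (\<lambda>M. integral {0<..<1} (f M)))"
      unfolding integral_f using lim_c by (rule convergent_imp_bounded)
  qed
  with lim_c show ?thesis
    using LIMSEQ_unique has_integral_integral by metis
qed

lemma has_integral_Ioc_iff_Ioo:
  fixes f :: "real \<Rightarrow> 'a :: banach"
  shows "(f has_integral I) {a<..b} \<longleftrightarrow> (f has_integral I) {a<..<b}"
  by (rule has_integral_spike_set_eq) (auto intro: negligible_subset[OF negligible_sing[of b]])

theorem mainTheorem2:
  fixes n :: nat
  assumes "n \<ge> 2"
  shows "(\<lambda>x. ln (F n x) / x) integrable_on {0<..1} \<and>
         integral {0<..1} (\<lambda>x. ln (F n x) / x)
           \<le> pi\<^sup>2 / 6 * (\<Sum>p\<in>{p. prime p \<and> p \<le> n}. 1 / ln (real p))"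
proof -
  define P where "P = {p. prime p \<and> p \<le> n}"
  define h where "h x = ln (F n x) / x" for x :: real
  define G where "G x = (\<Sum>p\<in>P. - ln (1 - x powr ln (real p)) / x)" for x :: real
  have G_integral: "(G has_integral (\<Sum>p\<in>P. pi\<^sup>2 / 6 / ln (real p))) {0<..<1}"
    unfolding G_def P_def
    by (intro has_integral_sum has_integral_neg_ln_one_minus_powr_div)
      (auto dest: prime_gt_1_nat)
  have h_integrable: "h integrable_on {0<..<1}"
  proof (rule measurable_bounded_by_integrable_imp_integrable)
    show "h \<in> borel_measurable (lebesgue_on {0<..<1})"
      using continuous_on_ln_F_div[of n] assms unfolding h_def
      by (intro continuous_imp_measurable_on_sets_lebesgue) auto
    show "norm (h x) \<le> G x" if "x \<in> {0<..<1}" for x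
      using that assms ln_F_div_bounds[of n x] by (simp add: h_def G_def P_def)
  qed (use G_integral in auto)
  have "integral {0<..<1} h \<le> integral {0<..<1} G"
    using h_integrable G_integral assms ln_F_div_bounds
    by (intro integral_le) (auto simp: h_def G_def P_def)
  also have "\<dots> = pi\<^sup>2 / 6 * (\<Sum>p\<in>P. 1 / ln (real p))"
    using G_integral by (simp add: integral_unique sum_distrib_left)
  finally have bound: "integral {0<..<1} h \<le> pi\<^sup>2 / 6 * (\<Sum>p\<in>P. 1 / ln (real p))" .
  have "(h has_integral integral {0<..<1} h) {0<..1}"
    using h_integrable by (simp add: has_integral_Ioc_iff_Ioo has_integral_integral)
  then have "h integrable_on {0<..1}" "integral {0<..1} h = integral {0<..<1} h"
    by (auto simp: integral_unique)
  with bound show ?thesis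
    unfolding h_def[abs_def] P_def by simp
qed

end
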